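(* For every instance $(N,C,\mathbf{A},k)$ with $|N|=n$ that has at least one cohesive group, the committee output by GreedyAV has JR degree at least $\frac{n}{k^2}$.
   Context: An instance consists of voters $N=\{1,\dots,n\}$, candidates $C$, approval ballots $A_i\subseteq C$ for $i\in N$, and a committee size $k$ with $1\le k\le|C|$. A set $N'\subseteq N$ is a cohesive group if $|N'|\ge n/k$ and $|\bigcap_{i\in N'}A_i|\ge 1$. A size-$k$ committee $W\subseteq C$ achieves JR degree $c$ if every cohesive group contains at least $c$ voters $i$ with $|A_i\cap W|\ge1$. GreedyAV: start with $W=\emptyset$ and the set $R=N$ of remaining voters; repeat $k$ times: choose a candidate $c\notin W$ approved by the maximum number of voters in $R$ (ties broken arbitrarily), add $c$ to $W$, and remove from $R$ all voters approving $c$; output $W$. *)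

theory Defs
  imports Complex_Main
begin

(* Voters are N = {1..n}; ballots A :: nat => 'c set; candidates C :: 'c set. *)

definition cohesive_group :: "nat set \<Rightarrow> 'c set \<Rightarrow> (nat \<Rightarrow> 'c set) \<Rightarrow> nat \<Rightarrow> nat set \<Rightarrow> bool" where
  "cohesive_group N C A k N' \<longleftrightarrow>
     N' \<subseteq> N \<and> real (card N') \<ge> real (card N) / real k \<and>
     card {c \<in> C. \<forall>i\<in>N'. c \<in> A i} \<ge> 1"

definition achieves_JR_degree ::
  "nat set \<Rightarrow> 'c set \<Rightarrow> (nat \<Rightarrow> 'c set) \<Rightarrow> nat \<Rightarrow> 'c set \<Rightarrow> nat \<Rightarrow> bool" where
  "achieves_JR_degree N C A k W d \<longleftrightarrow>
     (\<forall>N'. cohesive_group N C A k N' \<longrightarrow> card {i \<in> N'. card (A i \<inter> W) \<ge> 1} \<ge> d)"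

(* one iteration of GreedyAV on state (W, R); ties broken arbitrarily *)
definition greedyAV_step ::
  "'c set \<Rightarrow> (nat \<Rightarrow> 'c set) \<Rightarrow> ('c set \<times> nat set) \<Rightarrow> ('c set \<times> nat set) \<Rightarrow> bool" where
  "greedyAV_step C A s s' \<longleftrightarrow>
     (\<exists>c \<in> C - fst s.
        (\<forall>c' \<in> C - fst s. card {i \<in> snd s. c' \<in> A i} \<le> card {i \<in> snd s. c \<in> A i}) \<and>
        s' = (insert c (fst s), snd s - {i. c \<in> A i}))"

definition greedyAV_output :: "nat set \<Rightarrow> 'c set \<Rightarrow> (nat \<Rightarrow> 'c set) \<Rightarrow> nat \<Rightarrow> 'c set \<Rightarrow> bool" where
  "greedyAV_output N C A k W \<longleftrightarrow> (\<exists>R. (greedyAV_step C A ^^ k) ({}, N) (W, R))"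

end

theory Submission
  imports Defs
begin

(* Let N' be cohesive with common candidate c, and let U be the part of N' left uncovered.
   If c \<in> W then U is empty. Otherwise c was available in every round, so the first
   round removes at least |N'| voters and each of the other k - 1 rounds removes at least
   |U| voters, while U itself survives all rounds: k |U| + |N'| \<le> n. Together
   with |N'| \<ge> n/k this gives |N' - U| \<ge> |N'| - (n - |N'|)/k \<ge> n/k^2. *)

lemma greedyAV_step_mono:
  assumes "greedyAV_step C A (W, R) (W', R')"
  shows "W \<subseteq> W' \<and> R' \<subseteq> R"
  using assms unfolding greedyAV_step_def by auto

lemma greedyAV_steps_mono:
  assumes "(greedyAV_step C A)\<^sup>*\<^sup>* (W, R) (W', R')"
  shows "W \<subseteq> W' \<and> R' \<subseteq> R"
  using assms by (induction rule: rtranclp_induct2) (simp, metis greedyAV_step_mono order_trans)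

lemma greedyAV_steps_remaining:
  assumes "(greedyAV_step C A)\<^sup>*\<^sup>* (W, R) (W', R')"
    and "R = {i \<in> N. A i \<inter> W = {}}"
  shows "R' = {i \<in> N. A i \<inter> W' = {}}"
  using assms by (induction rule: rtranclp_induct2) (auto simp: greedyAV_step_def)

lemma greedyAV_step_removes_at_least:
  assumes step: "greedyAV_step C A (W, R) (W', R')"
    and "c \<in> C" "c \<notin> W'" "finite R"
  shows "card R' + card {i \<in> R. c \<in> A i} \<le> card R"
proof -
  obtain c' where "c' \<in> C - W"
    and "\<forall>c'' \<in> C - W. card {i \<in> R. c'' \<in> A i} \<le> card {i \<in> R. c' \<in> A i}"
    and "W' = insert c' W" and R': "R' = R - {i \<in> R. c' \<in> A i}"
    using step unfolding greedyAV_step_def by auto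
  then have "card {i \<in> R. c \<in> A i} \<le> card {i \<in> R. c' \<in> A i}"
    using \<open>c \<in> C\<close> \<open>c \<notin> W'\<close> by blast
  moreover have "card R' = card R - card {i \<in> R. c' \<in> A i}"
    unfolding R' by (rule card_Diff_subset) (use \<open>finite R\<close> in auto)
  moreover have "card {i \<in> R. c' \<in> A i} \<le> card R"
    by (rule card_mono) (use \<open>finite R\<close> in auto)
  ultimately show ?thesis by linarith
qed

lemma greedyAV_run_removes_at_least:
  assumes "(greedyAV_step C A ^^ m) (W0, R0) (W, R)"
    and "c \<in> C" "c \<notin> W" "finite R0"
  shows "card R + m * card {i \<in> R. c \<in> A i} \<le> card R0"
  using assms(1,3)
proof (induction m arbitrary: W R)
  case 0
  then show ?case by simp
next
  case (Suc m)
  from Suc.prems(1) obtain s where "(greedyAV_step C A ^^ m) (W0, R0) s"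
    and "greedyAV_step C A s (W, R)"
    by (rule relpowp_Suc_E)
  moreover obtain W1 R1 where "s = (W1, R1)"
    by fastforce
  ultimately have run: "(greedyAV_step C A ^^ m) (W0, R0) (W1, R1)"
    and step: "greedyAV_step C A (W1, R1) (W, R)"
    by simp_all
  have "W1 \<subseteq> W" "R \<subseteq> R1"
    using greedyAV_step_mono[OF step] by auto
  have "R1 \<subseteq> R0"
    using greedyAV_steps_mono[OF relpowp_imp_rtranclp[OF run]] by blast
  then have "finite R1"
    using \<open>finite R0\<close> by (rule finite_subset)
  have IH: "card R1 + m * card {i \<in> R1. c \<in> A i} \<le> card R0"
    using Suc.IH[OF run] \<open>W1 \<subseteq> W\<close> \<open>c \<notin> W\<close> by blast
  have "card R + card {i \<in> R1. c \<in> A i} \<le> card R1"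
    using greedyAV_step_removes_at_least[OF step \<open>c \<in> C\<close> \<open>c \<notin> W\<close> \<open>finite R1\<close>] .
  moreover have le: "card {i \<in> R. c \<in> A i} \<le> card {i \<in> R1. c \<in> A i}"
    by (rule card_mono) (use \<open>finite R1\<close> \<open>R \<subseteq> R1\<close> in auto)
  moreover have "m * card {i \<in> R. c \<in> A i} \<le> m * card {i \<in> R1. c \<in> A i}"
    using le by (rule mult_le_mono2)
  ultimately show ?case
    using IH unfolding mult_Suc by linarith
qed

lemma greedyAV_uncovered_bound:
  assumes run: "(greedyAV_step C A ^^ k) ({}, N) (W, R)"
    and "finite N" "1 \<le> k"
    and "N' \<subseteq> N" "c \<in> C" "\<forall>i \<in> N'. c \<in> A i"
  shows "k * card (N' \<inter> R) + card N' \<le> card N"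
proof (cases "c \<in> W")
  case True
  have "R = {i \<in> N. A i \<inter> W = {}}"
    using greedyAV_steps_remaining[OF relpowp_imp_rtranclp[OF run]] by simp
  with True assms(6) have "N' \<inter> R = {}" by auto
  then show ?thesis
    using card_mono[OF \<open>finite N\<close> \<open>N' \<subseteq> N\<close>] by simp
next
  case False
  obtain W1 R1 where first: "greedyAV_step C A ({}, N) (W1, R1)"
    and rest: "(greedyAV_step C A ^^ (k - 1)) (W1, R1) (W, R)"
  proof -
    have "(greedyAV_step C A ^^ Suc (k - 1)) ({}, N) (W, R)"
      using run \<open>1 \<le> k\<close> by simp
    then show ?thesis
      using that by (metis relpowp_Suc_E2 surj_pair)
  qed
  have "W1 \<subseteq> W" "R \<subseteq> R1" "R1 \<subseteq> N"
    using greedyAV_steps_mono[OF relpowp_imp_rtranclp[OF rest]] greedyAV_step_mono[OF first]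
    by auto
  have "finite R1" "finite R"
    using \<open>finite N\<close> \<open>R1 \<subseteq> N\<close> \<open>R \<subseteq> R1\<close> by (auto intro: finite_subset)
  have "card R1 + card {i \<in> N. c \<in> A i} \<le> card N"
    using greedyAV_step_removes_at_least[OF first \<open>c \<in> C\<close>] False \<open>W1 \<subseteq> W\<close> \<open>finite N\<close>
    by blast
  moreover have "card N' \<le> card {i \<in> N. c \<in> A i}"
    by (rule card_mono) (use assms(2,4,6) in auto)
  moreover have "card R + (k - 1) * card {i \<in> R. c \<in> A i} \<le> card R1"
    using greedyAV_run_removes_at_least[OF rest \<open>c \<in> C\<close> False \<open>finite R1\<close>] .
  moreover have "card (N' \<inter> R) \<le> card R"
    by (rule card_mono) (use \<open>finite R\<close> in auto)
  moreover have "(k - 1) * card (N' \<inter> R) \<le> (k - 1) * card {i \<in> R. c \<in> A i}"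
    by (rule mult_le_mono2, rule card_mono) (use \<open>finite R\<close> assms(6) in auto)
  moreover have "k * card (N' \<inter> R) = card (N' \<inter> R) + (k - 1) * card (N' \<inter> R)"
    using \<open>1 \<le> k\<close> by (cases k) auto
  ultimately show ?thesis by linarith
qed

lemma divide_square_le_diff:
  fixes k a u n :: real
  assumes "k > 0" "n / k \<le> a" "k * u + a \<le> n"
  shows "n / k ^ 2 \<le> a - u"
proof -
  have "n \<le> k * a"
    using assms(1,2) by (simp add: field_simps)
  then have "n / k \<le> k * a + a - n"
    using assms(2) by linarith
  also have "\<dots> \<le> k * (a - u)"
    using assms(3) by (simp add: algebra_simps)
  finally have "n / k \<le> k * (a - u)" .
  then show ?thesis
    using assms(1) by (simp add: field_simps power2_eq_square)
qed

lemma greedyAV_covers_cohesive_group: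
  assumes "greedyAV_output N C A k W"
    and "finite N" "finite C" "\<forall>i \<in> N. A i \<subseteq> C" "1 \<le> k"
    and "cohesive_group N C A k N'"
  shows "real (card N) / real k ^ 2 \<le> card {i \<in> N'. card (A i \<inter> W) \<ge> 1}"
proof -
  obtain R where run: "(greedyAV_step C A ^^ k) ({}, N) (W, R)"
    using assms(1) unfolding greedyAV_output_def by auto
  have "N' \<subseteq> N" and large: "real (card N) / real k \<le> card N'"
    and "{c \<in> C. \<forall>i \<in> N'. c \<in> A i} \<noteq> {}"
    using assms(6) unfolding cohesive_group_def by (auto simp: Suc_le_eq card_gt_0_iff)
  then obtain c where "c \<in> C" "\<forall>i \<in> N'. c \<in> A i"
    by blast
  have "R = {i \<in> N. A i \<inter> W = {}}"
    using greedyAV_steps_remaining[OF relpowp_imp_rtranclp[OF run]] by simp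
  moreover have "finite (A i)" if "i \<in> N'" for i
    using assms(3,4) \<open>N' \<subseteq> N\<close> that by (meson finite_subset subsetD)
  ultimately have covered: "{i \<in> N'. card (A i \<inter> W) \<ge> 1} = N' - N' \<inter> R"
    using \<open>N' \<subseteq> N\<close> by (auto simp: Suc_le_eq card_gt_0_iff)
  have "k * card (N' \<inter> R) + card N' \<le> card N"
    using greedyAV_uncovered_bound[OF run] assms(2,5) \<open>N' \<subseteq> N\<close> \<open>c \<in> C\<close> \<open>\<forall>i \<in> N'. c \<in> A i\<close> .
  then have "real (card N) / real k ^ 2 \<le> real (card N') - real (card (N' \<inter> R))"
    using divide_square_le_diff[OF _ large] \<open>1 \<le> k\<close> by (simp flip: of_nat_mult of_nat_add)
  then show ?thesis
    using covered \<open>N' \<subseteq> N\<close> \<open>finite N\<close> by (simp add: card_Diff_subset finite_subset card_mono)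
qed

theorem proposition2:
  fixes n k :: nat and C :: "'c set" and A :: "nat \<Rightarrow> 'c set" and W :: "'c set"
  assumes "finite C"
    and "\<forall>i \<in> {1..n}. A i \<subseteq> C"
    and "1 \<le> k" and "k \<le> card C"
    and "\<exists>N'. cohesive_group {1..n} C A k N'"
    and "greedyAV_output {1..n} C A k W"
  shows "\<exists>d. real d \<ge> real n / real k ^ 2 \<and> achieves_JR_degree {1..n} C A k W d"
proof -
  have "achieves_JR_degree {1..n} C A k W (nat \<lceil>real n / real k ^ 2\<rceil>)"
    using greedyAV_covers_cohesive_group[OF assms(6) _ assms(1,2,3)]
    unfolding achieves_JR_degree_def by (simp add: nat_le_iff ceiling_le_iff)
  then show ?thesis
    by (intro exI[of _ "nat \<lceil>real n / real k ^ 2\<rceil>"]) linarith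
qed

end
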